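(* Let $h^{-1}$ and $h_2^{-1}$ be as in the context. Then: (i) for $y>1+e$, $h^{-1}(y)\le 2\,\frac{y-1}{\log(y-1)}$; (ii) for $y>1+e$, $h_2^{-1}(y)\le 2\,\frac{y-1}{\log(y-1)}-1$; (iii) for $c>\sqrt2$ and $0\le y\le 9c^{-2}(c^2/2-1)^2$, $h_2^{-1}(y)\le c\sqrt y$; in particular with $c=2$ this holds for $0\le y\le 9/4$, and with $c=2.2$ it holds for $0\le y\le 1+e$; (iv) for $0<y<\infty$, $$h_2^{-1}(y)\le\begin{cases}2.2\sqrt y, & y\le 1+e,\\[2pt] 2\frac{y-1}{\log(y-1)}-1, & y>1+e.\end{cases}$$
   Context: $h(x)=x(\log x-1)+1$ restricted to $[1,\infty)$ is an increasing bijection onto $[0,\infty)$ with inverse $h^{-1}$; $h_2(x)=h(1+x)=(1+x)\log(1+x)-x$ is an increasing bijection of $[0,\infty)$ onto itself with inverse $h_2^{-1}$. *)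

theory Defs
  imports "HOL-Analysis.Analysis"
begin

definition h :: "real \<Rightarrow> real" where
  "h x = x * (ln x - 1) + 1"

definition h2 :: "real \<Rightarrow> real" where
  "h2 x = (1 + x) * ln (1 + x) - x"

text \<open>Inverse of h restricted to [1,\<infinity>), defined on [0,\<infinity>).\<close>
definition h_inv :: "real \<Rightarrow> real" where
  "h_inv y = (THE x. x \<ge> 1 \<and> h x = y)"

definition h2_inv :: "real \<Rightarrow> real" where
  "h2_inv y = (THE x. x \<ge> 0 \<and> h2 x = y)"

end

theory Submission
  imports Defs
begin

text \<open>
  Since \<open>h' = ln\<close>, the function \<open>h\<close> increases strictly on \<open>[1,\<infinity>)\<close>, so an upper bound
  \<open>h\<^sup>-\<^sup>1(y) \<le> B\<close> follows from \<open>y \<le> h B\<close>, and \<open>h\<^sub>2\<^sup>-\<^sup>1 = h\<^sup>-\<^sup>1 - 1\<close>.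
  For large \<open>y\<close> take \<open>B = 2t / ln t\<close> with \<open>t = y - 1\<close>: then \<open>ln B - 1 \<ge> ln t / 2\<close> by
  \<open>ln u \<le> u - 1\<close> at \<open>u = ln t / 2\<close>, whence \<open>h B \<ge> 1 + t\<close>.
  For small \<open>y\<close> use the lower bound \<open>h\<^sub>2(x) \<ge> 3x\<^sup>2 / (6 + 2x)\<close>, obtained by integrating
  \<open>ln (1 + x) \<ge> 2x / (2 + x)\<close>; at \<open>x = c\<surd>y\<close> the right-hand side is at least \<open>y\<close> as long as
  \<open>x \<le> 3 (c\<^sup>2/2 - 1)\<close>.
\<close>

lemma h_has_real_derivative: "x > 0 \<Longrightarrow> (h has_real_derivative ln x) (at x)"
  unfolding h_def by (auto intro!: derivative_eq_intros simp: field_simps)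

lemma continuous_on_h: "a > 0 \<Longrightarrow> continuous_on {a..b} h"
  unfolding h_def by (intro continuous_intros) auto

lemma h_1 [simp]: "h 1 = 0"
  unfolding h_def by simp

lemma h2_eq_h: "h2 x = h (1 + x)"
  unfolding h_def h2_def by (simp add: algebra_simps)

lemma h_strict_mono: "1 \<le> a \<Longrightarrow> a < b \<Longrightarrow> h a < h b"
  by (rule DERIV_pos_imp_increasing_open[of a b h])
     (auto intro!: exI conjI h_has_real_derivative continuous_on_h)

lemma h_inj: "1 \<le> a \<Longrightarrow> 1 \<le> b \<Longrightarrow> h a = h b \<Longrightarrow> a = b"
  by (metis h_strict_mono less_irrefl linorder_neqE_linordered_idom)

lemma h_inv_h: "1 \<le> x \<Longrightarrow> h_inv (h x) = x"
  unfolding h_inv_def by (rule the_equality) (auto intro: h_inj)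

lemma h2_inv_h: "1 \<le> x \<Longrightarrow> h2_inv (h x) = x - 1"
  unfolding h2_inv_def h2_eq_h by (rule the_equality) (auto dest!: h_inj[rotated 2])

lemma h_attains:
  assumes "1 \<le> B" "0 \<le> y" "y \<le> h B"
  obtains x where "1 \<le> x" "x \<le> B" "h x = y"
  using IVT'[of h 1 y B] continuous_on_h[of 1 B] assms by auto

lemma h_inv_le:
  assumes "1 \<le> B" "0 \<le> y" "y \<le> h B"
  shows "h_inv y \<le> B"
  using assms by (metis h_attains h_inv_h)

lemma h2_inv_le:
  assumes "0 \<le> x" "0 \<le> y" "y \<le> h2 x"
  shows "h2_inv y \<le> x"
proof -
  obtain z where "1 \<le> z" "z \<le> 1 + x" "h z = y"
    using h_attains[of "1 + x" y] assms by (auto simp: h2_eq_h)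
  then show ?thesis using h2_inv_h by auto
qed

lemma h_two_mult_div_ln_ge:
  fixes t :: real
  assumes t: "exp 1 < t"
  shows "1 \<le> 2 * (t / ln t)" and "1 + t \<le> h (2 * (t / ln t))"
proof -
  define L where "L = ln t"
  define B where "B = 2 * (t / L)"
  have t0: "0 < t" using t exp_gt_zero[of 1] by linarith
  have L1: "1 < L" unfolding L_def using t t0 by (metis ln_exp ln_less_cancel_iff exp_gt_zero)
  have "L < 2 * t" using ln_le_minus_one[OF t0] t0 by (simp add: L_def)
  then show B1: "1 \<le> 2 * (t / ln t)" using L1 by (simp add: L_def[symmetric] le_divide_eq)
  have "ln B = ln 2 + L - ln L"
    using t0 L1 by (auto simp: B_def L_def ln_mult ln_div)
  moreover have "ln (L / 2) \<le> L / 2 - 1" using L1 by (intro ln_le_minus_one) simp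
  moreover have "ln (L / 2) = ln L - ln 2" using L1 by (simp add: ln_div)
  ultimately have "L / 2 \<le> ln B - 1" by linarith
  then have "B * (L / 2) \<le> B * (ln B - 1)"
    using B1 by (intro mult_left_mono) (auto simp: B_def L_def)
  moreover have "B * (L / 2) = t" using L1 by (simp add: B_def)
  ultimately show "1 + t \<le> h (2 * (t / ln t))" by (simp add: h_def B_def L_def)
qed

lemma h_inv_le_two_mult_div_ln:
  fixes y :: real
  assumes "1 + exp 1 < y"
  shows "h_inv y \<le> 2 * ((y - 1) / ln (y - 1))"
    and "h2_inv y \<le> 2 * ((y - 1) / ln (y - 1)) - 1"
proof -
  have "exp 1 < y - 1" "0 \<le> y" using assms exp_gt_zero[of 1] by linarith+
  then show "h_inv y \<le> 2 * ((y - 1) / ln (y - 1))"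
    and "h2_inv y \<le> 2 * ((y - 1) / ln (y - 1)) - 1"
    using h_two_mult_div_ln_ge[of "y - 1"] h_inv_le h2_inv_le[of "2 * ((y - 1) / ln (y - 1)) - 1"]
    by (auto simp: h2_eq_h)
qed

lemma ln_one_plus_ge:
  fixes x :: real
  assumes "0 \<le> x"
  shows "2 * x / (2 + x) \<le> ln (1 + x)"
proof -
  let ?g = "\<lambda>x. ln (1 + x) - 2 * x / (2 + x)"
  have "?g 0 \<le> ?g x"
  proof (rule DERIV_nonneg_imp_increasing_open[OF assms])
    fix t :: real assume t: "0 < t" "t < x"
    have "0 < t \<Longrightarrow> (?g has_real_derivative t\<^sup>2 / ((1 + t) * (2 + t)\<^sup>2)) (at t)"
      by (rule derivative_eq_intros refl | simp)+
        (simp add: divide_simps power2_eq_square, simp add: algebra_simps)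
    with t show "\<exists>g'. (?g has_real_derivative g') (at t) \<and> 0 \<le> g'"
      by (intro exI conjI) auto
  qed (intro continuous_intros, auto)
  then show ?thesis by simp
qed

lemma h2_ge:
  fixes x :: real
  assumes "0 \<le> x"
  shows "3 * x\<^sup>2 / (6 + 2 * x) \<le> h2 x"
proof -
  let ?g = "\<lambda>x. h2 x - 3 * x\<^sup>2 / (6 + 2 * x)"
  have "?g 0 \<le> ?g x"
  proof (rule DERIV_nonneg_imp_increasing_open[OF assms])
    fix t :: real assume t: "0 < t" "t < x"
    have "0 < t \<Longrightarrow>
        (?g has_real_derivative ln (1 + t) - 3 * t * (6 + t) / (2 * (3 + t)\<^sup>2)) (at t)"
      unfolding h2_def by (rule derivative_eq_intros refl | simp)+
        (simp add: divide_simps power2_eq_square, simp add: algebra_simps)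
    \<comment> \<open>after clearing denominators this is \<open>0 \<le> t\<^sup>3\<close>\<close>
    moreover have "3 * t * (6 + t) / (2 * (3 + t)\<^sup>2) \<le> 2 * t / (2 + t)"
      using t by (simp add: divide_simps power2_eq_square add_pos_pos, simp add: algebra_simps)
    ultimately show "\<exists>g'. (?g has_real_derivative g') (at t) \<and> 0 \<le> g'"
      using ln_one_plus_ge[of t] t by (intro exI conjI) auto
  qed (unfold h2_def, intro continuous_intros, auto)
  then show ?thesis by (simp add: h2_def)
qed

lemma h2_inv_le_mult_sqrt:
  fixes c y :: real
  assumes c: "sqrt 2 < c" and y: "0 \<le> y" "y \<le> 9 / c\<^sup>2 * (c\<^sup>2 / 2 - 1)\<^sup>2"
  shows "h2_inv y \<le> c * sqrt y"
proof -
  define a where "a = c\<^sup>2 / 2 - 1"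
  define x where "x = c * sqrt y"
  have c0: "0 < c" using c real_sqrt_ge_zero[of 2] by linarith
  have a0: "0 < a" using power_strict_mono[OF c, of 2] by (simp add: a_def)
  have x0: "0 \<le> x" using c0 y by (simp add: x_def)
  have xsq: "x\<^sup>2 = c\<^sup>2 * y" using y by (simp add: x_def power_mult_distrib)
  have "x\<^sup>2 \<le> c\<^sup>2 * (9 / c\<^sup>2 * a\<^sup>2)"
    unfolding xsq a_def using y(2) by (rule mult_left_mono) simp
  also have "\<dots> = (3 * a)\<^sup>2"
    using c0 by (simp add: power_mult_distrib)
  finally have "x \<le> 3 * a"
    by (rule power2_le_imp_le) (use a0 in simp)
  then have "6 + 2 * x \<le> 3 * c\<^sup>2" by (simp add: a_def)
  then have "y * (6 + 2 * x) \<le> y * (3 * c\<^sup>2)" using y(1) by (rule mult_left_mono)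
  then have "y \<le> 3 * x\<^sup>2 / (6 + 2 * x)"
    using x0 xsq by (simp add: le_divide_eq mult_ac)
  also have "\<dots> \<le> h2 x" using x0 by (rule h2_ge)
  finally have "h2_inv y \<le> x" by (rule h2_inv_le[OF x0 y(1)])
  then show ?thesis by (simp add: x_def)
qed

lemma h2_inv_le_2_mult_sqrt: "0 \<le> y \<Longrightarrow> y \<le> 9 / 4 \<Longrightarrow> h2_inv y \<le> 2 * sqrt y"
  using h2_inv_le_mult_sqrt[of 2 y] real_sqrt_less_mono[of 2 4] by (simp add: power2_eq_square)

lemma h2_inv_le_2_2_mult_sqrt: "0 \<le> y \<Longrightarrow> y \<le> 1 + exp 1 \<Longrightarrow> h2_inv y \<le> 2.2 * sqrt y"
  using h2_inv_le_mult_sqrt[of "2.2" y] real_sqrt_less_mono[of 2 4] e_less_272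
  by (simp add: power2_eq_square)

theorem lemma15:
  shows "(\<forall>y::real. y > 1 + exp 1 \<longrightarrow> h_inv y \<le> 2 * ((y - 1) / ln (y - 1)))
    \<and> (\<forall>y::real. y > 1 + exp 1 \<longrightarrow> h2_inv y \<le> 2 * ((y - 1) / ln (y - 1)) - 1)
    \<and> (\<forall>c y::real. c > sqrt 2 \<longrightarrow> 0 \<le> y \<longrightarrow> y \<le> 9 / c\<^sup>2 * (c\<^sup>2 / 2 - 1)\<^sup>2
          \<longrightarrow> h2_inv y \<le> c * sqrt y)
    \<and> (\<forall>y::real. 0 \<le> y \<longrightarrow> y \<le> 9 / 4 \<longrightarrow> h2_inv y \<le> 2 * sqrt y)
    \<and> (\<forall>y::real. 0 \<le> y \<longrightarrow> y \<le> 1 + exp 1 \<longrightarrow> h2_inv y \<le> 2.2 * sqrt y)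
    \<and> (\<forall>y::real. 0 < y \<longrightarrow>
          h2_inv y \<le> (if y \<le> 1 + exp 1 then 2.2 * sqrt y
                       else 2 * ((y - 1) / ln (y - 1)) - 1))"
  using h_inv_le_two_mult_div_ln h2_inv_le_mult_sqrt
    h2_inv_le_2_mult_sqrt h2_inv_le_2_2_mult_sqrt
  by (auto simp: not_le)

end
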